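(* For every positive integer $n$ and every pseudo-composition $\alpha$ of $n$, the type $B$ ribbon number $r^B_\alpha$ is odd; equivalently $c^B_{2,0}(n)=0$ and $c^B_{2,1}(n)=2^n$.
   Context: A signed permutation of $[n]$ is a bijection $w$ of $\{\pm1,\ldots,\pm n\}$ with $w(-i)=-w(i)$; these form $\mathfrak{S}^B_n$. With $w(0):=0$, $D(w)=\{i\in\{0,\ldots,n-1\}: w(i)>w(i+1)\}$. A pseudo-composition of $n$ ($\alpha\models_0 n$) is a sequence $(\alpha_1,\ldots,\alpha_\ell)$ of integers with $\alpha_1\ge0$, $\alpha_2,\ldots,\alpha_\ell>0$ and sum $n$, with $D(\alpha)=\{\alpha_1,\alpha_1+\alpha_2,\ldots,\alpha_1+\cdots+\alpha_{\ell-1}\}$. Then $r^B_\alpha=|\{w\in\mathfrak{S}^B_n: D(w)=D(\alpha)\}|$ and $c^B_{p,i}(n)=|\{\alpha\models_0 n: r^B_\alpha\equiv i\pmod p\}|$. There are $2^n$ pseudo-compositions of $n$. *)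

theory Defs
  imports Main
begin

text \<open>Signed permutations of [n], represented as functions on int that are bijections of
  {-n..n} (hence of the pm-set, since oddness forces w 0 = 0), odd, and the identity
  outside {-n..n} (extensionality, so that the set is finite).\<close>
definition signed_perms :: "nat \<Rightarrow> (int \<Rightarrow> int) set" where
  "signed_perms n = {w. bij_betw w {- int n..int n} {- int n..int n}
                        \<and> (\<forall>i. w (- i) = - w i)
                        \<and> (\<forall>x. x \<notin> {- int n..int n} \<longrightarrow> w x = x)}"

definition descent_set :: "nat \<Rightarrow> (int \<Rightarrow> int) \<Rightarrow> nat set" where
  "descent_set n w = {i. i < n \<and> w (int i) > w (int i + 1)}"

definition pseudo_comps :: "nat \<Rightarrow> nat list set" where
  "pseudo_comps n = {\<alpha>. \<alpha> \<noteq> [] \<and> (\<forall>a\<in>set (tl \<alpha>). a > 0) \<and> sum_list \<alpha> = n}"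

definition comp_descent :: "nat list \<Rightarrow> nat set" where
  "comp_descent \<alpha> = {sum_list (take k \<alpha>) | k. 1 \<le> k \<and> k < length \<alpha>}"

definition ribbonB :: "nat \<Rightarrow> nat list \<Rightarrow> nat" where
  "ribbonB n \<alpha> = card {w \<in> signed_perms n. descent_set n w = comp_descent \<alpha>}"

definition cB :: "nat \<Rightarrow> nat \<Rightarrow> nat \<Rightarrow> nat" where
  "cB p i n = card {\<alpha> \<in> pseudo_comps n. ribbonB n \<alpha> mod p = i mod p}"

end

theory Submission
  imports Defs "HOL-Combinatorics.Permutations" "HOL-Library.Disjoint_Sets" "HOL-Library.Z2"
begin

(* Every S \<subseteq> {0..n-1} is the descent set of an odd number of signed permutations, by
   induction on |S|. Only the identity has no descents. For S \<noteq> {} with t = max S, the signed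
   permutations whose descent set agrees with S outside t are exactly those with descent set S
   or S - {t}; all of them increase on positions t+1..n. Negating the entry of least absolute
   value on that segment keeps it increasing and changes no other descent, so it is a
   fixed-point-free involution of this set, and the two classes have equally many elements
   modulo 2. Since D(\<alpha>) \<subseteq> {0..n-1} for every pseudo-composition \<alpha> of n, each r^B_\<alpha> is odd. *)

lemma even_card_if_fixpoint_free_involution:
  assumes "\<And>x. x \<in> X \<Longrightarrow> h x \<in> X" and "\<And>x. x \<in> X \<Longrightarrow> h (h x) = x"
    and "\<And>x. x \<in> X \<Longrightarrow> h x \<noteq> x"
  shows "even (card X)"
proof -
  \<comment> \<open>Count X in the two-element field, where the pairs x, h x cancel.\<close>
  have "(\<Sum>x\<in>X. 1 :: bit) = 0"
    by (rule sum_involution_eq_0[where h = h]) (use assms in simp_all)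
  then have "of_nat (card X) = (0 :: bit)"
    by simp
  then show ?thesis
    by (metis Z2.bit_eq_iff even_of_nat_iff even_zero)
qed

lemma increasing_steps_bound:
  fixes f :: "int \<Rightarrow> int"
  assumes ascent: "\<And>k. a \<le> k \<Longrightarrow> k < b \<Longrightarrow> f k < f (k + 1)"
    and "a \<le> i" "i \<le> j" "j \<le> b"
  shows "f i + (j - i) \<le> f j"
  using \<open>i \<le> j\<close> \<open>j \<le> b\<close>
proof (induction j rule: int_ge_induct)
  case (step j)
  then have "f j < f (j + 1)"
    using ascent[of j] \<open>a \<le> i\<close> by simp
  with step show ?case
    by simp
qed simp

lemma increasing_after_negating_least_abs:
  fixes f :: "int \<Rightarrow> 'a :: linordered_idom"
  assumes ascent: "\<And>k. a \<le> k \<Longrightarrow> k < b \<Longrightarrow> f k < f (k + 1)"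
    and p: "p \<in> {a..b}" and least: "\<And>q. q \<in> {a..b} \<Longrightarrow> q \<noteq> p \<Longrightarrow> \<bar>f p\<bar> < \<bar>f q\<bar>"
    and k: "a \<le> k" "k < b"
  shows "(f(p := - f p)) k < (f(p := - f p)) (k + 1)"
  using ascent[OF k] least[of k] least[of "k + 1"] p k
  by (cases "k = p"; cases "k + 1 = p") (auto simp: abs_if split: if_splits)

lemma signed_perms_iff:
  "w \<in> signed_perms n \<longleftrightarrow> w permutes {- int n..int n} \<and> (\<forall>i. w (- i) = - w i)"
  unfolding signed_perms_def
  by (auto intro: bij_imp_permutes permutes_imp_bij permutes_not_in)

lemma signed_perms_odd: "w \<in> signed_perms n \<Longrightarrow> w (- i) = - w i"
  by (simp add: signed_perms_iff)

lemma signed_perms_zero: "w \<in> signed_perms n \<Longrightarrow> w 0 = 0"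
  using signed_perms_odd[of w n 0] by simp

lemma signed_perms_inj: "w \<in> signed_perms n \<Longrightarrow> inj w"
  by (auto simp: signed_perms_iff intro: permutes_inj)

lemma finite_signed_perms: "finite (signed_perms n)"
  by (rule finite_subset[OF _ finite_permutations[of "{- int n..int n}"]])
    (auto simp: signed_perms_iff)

lemma id_signed_perms: "id \<in> signed_perms n"
  by (simp add: signed_perms_iff)

lemma signed_perms_abs_inj:
  assumes w: "w \<in> signed_perms n" and "0 \<le> a" "0 \<le> b" "\<bar>w a\<bar> = \<bar>w b\<bar>"
  shows "a = b"
proof -
  have "w a = w b \<or> w a = w (- b)"
    using assms signed_perms_odd[OF w] by arith
  then have "a = b \<or> a = - b"
    using signed_perms_inj[OF w] by (auto dest: injD)
  then show ?thesis
    using assms by linarith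
qed

lemma signed_perms_ascent:
  assumes "w \<in> signed_perms n" "i < n" "i \<notin> descent_set n w"
  shows "w (int i) < w (int i + 1)"
  using assms signed_perms_inj[OF assms(1)] injD[of w "int i" "int i + 1"]
  by (fastforce simp: descent_set_def)

lemma descent_set_empty_imp_id:
  assumes w: "w \<in> signed_perms n" and "descent_set n w = {}"
  shows "w = id"
proof -
  have step: "w k < w (k + 1)" if "0 \<le> k" "k < int n" for k
    using signed_perms_ascent[OF w, of "nat k"] that assms(2) by simp
  have "w (int n) \<le> int n"
    using w permutes_in_image[of w "{- int n..int n}" "int n"] by (auto simp: signed_perms_iff)
  then have fixed: "w k = k" if "0 \<le> k" "k \<le> int n" for k
    using increasing_steps_bound[where f = w and a = 0 and b = "int n", OF step, of 0 k]
      increasing_steps_bound[where f = w and a = 0 and b = "int n", OF step, of k "int n"]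
      signed_perms_zero[OF w] that by simp
  show ?thesis
  proof
    fix x
    show "w x = id x"
    proof (cases "x \<in> {- int n..int n}")
      case True
      then show ?thesis
        using fixed[of x] fixed[of "- x"] signed_perms_odd[OF w, of "- x"] by (cases "0 \<le> x") auto
    next
      case False
      then show ?thesis
        using w permutes_not_in[of w _ x] by (auto simp: signed_perms_iff)
    qed
  qed
qed

definition descent_class :: "nat \<Rightarrow> nat set \<Rightarrow> (int \<Rightarrow> int) set" where
  "descent_class n S = {w \<in> signed_perms n. descent_set n w = S}"

lemma descent_class_empty: "descent_class n {} = {id}"
  using descent_set_empty_imp_id id_signed_perms
  by (auto simp: descent_class_def descent_set_def)

definition flip_sign_at :: "int \<Rightarrow> (int \<Rightarrow> int) \<Rightarrow> int \<Rightarrow> int" where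
  "flip_sign_at p w x = (if \<bar>x\<bar> = \<bar>p\<bar> then - w x else w x)"

lemma abs_flip_sign_at [simp]: "\<bar>flip_sign_at p w x\<bar> = \<bar>w x\<bar>"
  by (simp add: flip_sign_at_def)

lemma flip_sign_at_flip_sign_at [simp]: "flip_sign_at p (flip_sign_at p w) = w"
  by (simp add: flip_sign_at_def fun_eq_iff)

lemma flip_sign_at_signed_perms:
  assumes w: "w \<in> signed_perms n" and p: "p \<in> {- int n..int n}"
  shows "flip_sign_at p w \<in> signed_perms n"
proof -
  have "flip_sign_at p w = w \<circ> transpose p (- p)"
    using signed_perms_odd[OF w] by (auto simp: fun_eq_iff flip_sign_at_def transpose_def abs_if)
  moreover have "transpose p (- p) permutes {- int n..int n}"
    using p by (intro permutes_swap_id) auto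
  ultimately have "flip_sign_at p w permutes {- int n..int n}"
    using w by (auto simp: signed_perms_iff intro: permutes_compose)
  moreover have "flip_sign_at p w (- i) = - flip_sign_at p w i" for i
    using signed_perms_odd[OF w] by (simp add: flip_sign_at_def)
  ultimately show ?thesis
    by (simp add: signed_perms_iff)
qed

definition flip_least_abs :: "nat \<Rightarrow> nat \<Rightarrow> (int \<Rightarrow> int) \<Rightarrow> int \<Rightarrow> int" where
  "flip_least_abs t n w = flip_sign_at (arg_min_on (\<lambda>q. \<bar>w q\<bar>) {int t + 1..int n}) w"

lemma flip_least_abs_involution: "flip_least_abs t n (flip_least_abs t n w) = w"
  by (simp add: flip_least_abs_def)

lemma least_abs_position:
  assumes w: "w \<in> signed_perms n" and "t < n"
  defines "p \<equiv> arg_min_on (\<lambda>q. \<bar>w q\<bar>) {int t + 1..int n}"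
  shows "p \<in> {int t + 1..int n}"
    and "\<And>q. q \<in> {int t + 1..int n} \<Longrightarrow> q \<noteq> p \<Longrightarrow> \<bar>w p\<bar> < \<bar>w q\<bar>"
proof -
  show p: "p \<in> {int t + 1..int n}"
    unfolding p_def using \<open>t < n\<close> by (intro arg_min_if_finite) auto
  fix q
  assume q: "q \<in> {int t + 1..int n}" "q \<noteq> p"
  have "\<bar>w p\<bar> \<le> \<bar>w q\<bar>"
    unfolding p_def using q by (intro arg_min_least) auto
  moreover have "\<bar>w p\<bar> \<noteq> \<bar>w q\<bar>"
    using signed_perms_abs_inj[OF w, of p q] p q by auto
  ultimately show "\<bar>w p\<bar> < \<bar>w q\<bar>"
    by simp
qed

lemma flip_least_abs_signed_perms:
  assumes "w \<in> signed_perms n" and "t < n"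
  shows "flip_least_abs t n w \<in> signed_perms n"
  unfolding flip_least_abs_def
  using least_abs_position(1)[OF assms] by (intro flip_sign_at_signed_perms[OF assms(1)]) auto

lemma flip_least_abs_neq:
  assumes w: "w \<in> signed_perms n" and "t < n"
  shows "flip_least_abs t n w \<noteq> w"
proof
  define p where "p = arg_min_on (\<lambda>q. \<bar>w q\<bar>) {int t + 1..int n}"
  assume "flip_least_abs t n w = w"
  then have "flip_sign_at p w p = w p"
    by (simp add: flip_least_abs_def p_def)
  then have "- w p = w p"
    by (simp add: flip_sign_at_def)
  then have "w p = w 0"
    using signed_perms_zero[OF w] by simp
  then have "p = 0"
    using signed_perms_inj[OF w] by (auto dest: injD)
  with least_abs_position(1)[OF assms] show False
    by (simp add: p_def)
qed

lemma descent_set_flip_least_abs: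
  assumes w: "w \<in> signed_perms n" and "t < n" and desc: "descent_set n w \<subseteq> {..t}"
  shows "descent_set n (flip_least_abs t n w) - {t} = descent_set n w - {t}"
proof -
  define p where "p = arg_min_on (\<lambda>q. \<bar>w q\<bar>) {int t + 1..int n}"
  note p = least_abs_position[OF assms(1,2), folded p_def]
  have step: "w k < w (k + 1)" if "int t + 1 \<le> k" "k < int n" for k
  proof -
    have "nat k \<notin> descent_set n w"
      using desc that by force
    then show ?thesis
      using signed_perms_ascent[OF w, of "nat k"] that by simp
  qed
  have flip: "flip_least_abs t n w k = (w(p := - w p)) k" if "0 \<le> k" for k
    using p(1) that by (simp add: flip_least_abs_def p_def[symmetric] flip_sign_at_def)
  have "i \<in> descent_set n (flip_least_abs t n w) \<longleftrightarrow> i \<in> descent_set n w"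
    if "i < n" "i \<noteq> t" for i
  proof (cases "i < t")
    case True
    then show ?thesis
      using flip[of "int i"] flip[of "int i + 1"] p(1) by (simp add: descent_set_def)
  next
    case False
    then have "int t + 1 \<le> int i"
      using \<open>i \<noteq> t\<close> by simp
    then show ?thesis
      using step[of "int i"] increasing_after_negating_least_abs[OF step p, of "int i"]
        flip[of "int i"] flip[of "int i + 1"] \<open>i < n\<close> by (simp add: descent_set_def)
  qed
  then show ?thesis
    by (auto simp: descent_set_def)
qed

lemma even_card_descent_class_pair:
  assumes S: "S \<subseteq> {..<n}" "S \<noteq> {}"
  shows "even (card (descent_class n S) + card (descent_class n (S - {Max S})))"
proof -
  define t where "t = Max S"
  have "finite S"
    using S(1) finite_subset by blast
  then have t: "t \<in> S" "S \<subseteq> {..t}"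
    using S(2) by (auto simp: t_def)
  then have "t < n"
    using S(1) by auto
  define W where "W = {w \<in> signed_perms n. descent_set n w - {t} = S - {t}}"
  have "D - {t} = S - {t} \<longleftrightarrow> D = S \<or> D = S - {t}" for D
    using t(1) by auto
  then have W_split: "W = descent_class n S \<union> descent_class n (S - {t})"
    by (auto simp: W_def descent_class_def)
  have "even (card W)"
  proof (rule even_card_if_fixpoint_free_involution[where h = "flip_least_abs t n"])
    fix w
    assume w: "w \<in> W"
    then have "descent_set n w \<subseteq> {..t}"
      using t(2) by (auto simp: W_def)
    then show "flip_least_abs t n w \<in> W"
      using w \<open>t < n\<close> descent_set_flip_least_abs flip_least_abs_signed_perms
      by (simp add: W_def)
    show "flip_least_abs t n (flip_least_abs t n w) = w"
      by (rule flip_least_abs_involution)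
    show "flip_least_abs t n w \<noteq> w"
      using w \<open>t < n\<close> flip_least_abs_neq by (simp add: W_def)
  qed
  moreover have "card W = card (descent_class n S) + card (descent_class n (S - {t}))"
    unfolding W_split using t(1) finite_signed_perms
    by (intro card_Un_disjoint) (auto simp: descent_class_def)
  ultimately show ?thesis
    by (simp add: t_def)
qed

lemma odd_card_descent_class: "S \<subseteq> {..<n} \<Longrightarrow> odd (card (descent_class n S))"
proof (induction "card S" arbitrary: S)
  case 0
  then have "S = {}"
    using finite_subset[OF _ finite_lessThan] by simp
  then show ?case
    by (simp add: descent_class_empty)
next
  case (Suc k)
  then have "finite S"
    using finite_subset[OF _ finite_lessThan] by simp
  with Suc.hyps(2) have "S \<noteq> {}"
    by auto
  then have "Max S \<in> S"
    using \<open>finite S\<close> by simp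
  then have "card (S - {Max S}) = k"
    using Suc.hyps(2) \<open>finite S\<close> by simp
  then have "odd (card (descent_class n (S - {Max S})))"
    using Suc.prems by (intro Suc.hyps(1)) auto
  then show ?case
    using even_card_descent_class_pair[OF Suc.prems \<open>S \<noteq> {}\<close>] by simp
qed

lemma comp_descent_subset:
  assumes "\<alpha> \<in> pseudo_comps n"
  shows "comp_descent \<alpha> \<subseteq> {..<n}"
proof
  fix x
  assume "x \<in> comp_descent \<alpha>"
  then obtain k where x: "x = sum_list (take k \<alpha>)" and k: "1 \<le> k" "k < length \<alpha>"
    unfolding comp_descent_def by blast
  have "\<alpha> ! k \<in> set (tl \<alpha>)"
    using k nth_tl[of "k - 1" \<alpha>] nth_mem[of "k - 1" "tl \<alpha>"] by simp
  then have "0 < \<alpha> ! k"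
    using assms by (simp add: pseudo_comps_def)
  moreover have "sum_list \<alpha> = x + \<alpha> ! k + sum_list (drop (Suc k) \<alpha>)"
    using k by (metis x append_take_drop_id sum_list_append Cons_nth_drop_Suc sum_list.Cons add.assoc)
  ultimately show "x \<in> {..<n}"
    using assms by (simp add: pseudo_comps_def)
qed

lemma snoc_in_pseudo_comps_iff:
  "\<beta> @ [x] \<in> pseudo_comps n \<longleftrightarrow>
     (\<beta> = [] \<and> x = n) \<or> (\<beta> \<noteq> [] \<and> (\<forall>a\<in>set (tl \<beta>). 0 < a) \<and> 0 < x \<and> sum_list \<beta> + x = n)"
  by (cases \<beta>) (auto simp: pseudo_comps_def)

lemma pseudo_comps_snoc_cases:
  assumes "\<alpha> \<in> pseudo_comps n"
  obtains \<beta> x where "\<alpha> = \<beta> @ [x]"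
  using assms rev_exhaust by (auto simp: pseudo_comps_def)

definition grow_comp :: "nat list \<times> bool \<Rightarrow> nat list" where
  "grow_comp = (\<lambda>(\<alpha>, b). if b then \<alpha> @ [1] else butlast \<alpha> @ [last \<alpha> + 1])"

lemma grow_comp_simps [simp]:
  "grow_comp (\<alpha>, True) = \<alpha> @ [1]"
  "grow_comp (\<beta> @ [x], False) = \<beta> @ [x + 1]"
  by (simp_all add: grow_comp_def)

lemma inj_on_grow_comp: "inj_on grow_comp (pseudo_comps n \<times> UNIV)"
proof (rule inj_onI, clarsimp)
  fix \<alpha> b \<alpha>' b'
  assume \<alpha>: "\<alpha> \<in> pseudo_comps n" and \<alpha>': "\<alpha>' \<in> pseudo_comps n"
    and eq: "grow_comp (\<alpha>, b) = grow_comp (\<alpha>', b')"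
  obtain \<beta> x \<beta>' x' where \<beta>: "\<alpha> = \<beta> @ [x]" and \<beta>': "\<alpha>' = \<beta>' @ [x']"
    using \<alpha> \<alpha>' by (metis pseudo_comps_snoc_cases)
  show "\<alpha> = \<alpha>' \<and> b = b'"
  proof (cases b; cases b')
    assume "b" "\<not> b'"
    then have "\<beta>' = \<beta> @ [x]" "x' = 0"
      using eq \<beta> \<beta>' by auto
    moreover have "\<beta>' @ [x'] \<in> pseudo_comps n"
      using \<alpha>' \<beta>' by simp
    ultimately show ?thesis
      unfolding snoc_in_pseudo_comps_iff by simp
  next
    assume "\<not> b" "b'"
    then have "\<beta> = \<beta>' @ [x']" "x = 0"
      using eq \<beta> \<beta>' by auto
    moreover have "\<beta> @ [x] \<in> pseudo_comps n"
      using \<alpha> \<beta> by simp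
    ultimately show ?thesis
      unfolding snoc_in_pseudo_comps_iff by simp
  qed (use eq \<beta> \<beta>' in auto)
qed

lemma grow_comp_image: "grow_comp ` (pseudo_comps n \<times> UNIV) = pseudo_comps (Suc n)"
proof (intro equalityI subsetI)
  fix \<gamma>
  assume "\<gamma> \<in> grow_comp ` (pseudo_comps n \<times> UNIV)"
  then obtain \<alpha> b where \<alpha>: "\<alpha> \<in> pseudo_comps n" and \<gamma>: "\<gamma> = grow_comp (\<alpha>, b)"
    by auto
  obtain \<beta> x where \<beta>: "\<alpha> = \<beta> @ [x]"
    using \<alpha> by (rule pseudo_comps_snoc_cases)
  show "\<gamma> \<in> pseudo_comps (Suc n)"
  proof (cases b)
    case True
    with \<alpha> \<gamma> show ?thesis
      by (auto simp: pseudo_comps_def)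
  next
    case False
    with \<alpha> \<beta> \<gamma> show ?thesis
      by (auto simp: snoc_in_pseudo_comps_iff)
  qed
next
  fix \<gamma>
  assume \<gamma>: "\<gamma> \<in> pseudo_comps (Suc n)"
  then obtain \<beta> x where \<beta>: "\<gamma> = \<beta> @ [x]"
    by (rule pseudo_comps_snoc_cases)
  show "\<gamma> \<in> grow_comp ` (pseudo_comps n \<times> UNIV)"
  proof (cases "\<beta> \<noteq> [] \<and> x = 1")
    case True
    then have "\<beta> \<in> pseudo_comps n" "\<gamma> = grow_comp (\<beta>, True)"
      using \<gamma> \<beta> by (auto simp: snoc_in_pseudo_comps_iff pseudo_comps_def)
    then show ?thesis
      by blast
  next
    case False
    then have "\<beta> @ [x - 1] \<in> pseudo_comps n" "\<gamma> = grow_comp (\<beta> @ [x - 1], False)"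
      using \<gamma> \<beta> by (auto simp: snoc_in_pseudo_comps_iff)
    then show ?thesis
      by blast
  qed
qed

lemma card_pseudo_comps: "card (pseudo_comps n) = 2 ^ n"
proof (induction n)
  case 0
  have "pseudo_comps 0 = {[0]}"
  proof (intro equalityI subsetI)
    fix \<alpha>
    assume \<alpha>: "\<alpha> \<in> pseudo_comps 0"
    then obtain \<beta> x where "\<alpha> = \<beta> @ [x]"
      by (rule pseudo_comps_snoc_cases)
    with \<alpha> show "\<alpha> \<in> {[0]}"
      by (auto simp: snoc_in_pseudo_comps_iff)
  qed (simp add: pseudo_comps_def)
  then show ?case
    by simp
next
  case (Suc n)
  have "card (pseudo_comps (Suc n)) = card (pseudo_comps n \<times> (UNIV :: bool set))"
    by (simp only: grow_comp_image[symmetric] card_image[OF inj_on_grow_comp])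
  then show ?case
    using Suc by (simp add: card_cartesian_product)
qed

theorem corollary4p2:
  fixes n :: nat
  assumes "n \<ge> 1"
  shows "(\<forall>\<alpha>\<in>pseudo_comps n. odd (ribbonB n \<alpha>)) \<and> cB 2 0 n = 0 \<and> cB 2 1 n = 2 ^ n"
proof -
  have odd: "odd (ribbonB n \<alpha>)" if "\<alpha> \<in> pseudo_comps n" for \<alpha>
    using odd_card_descent_class[OF comp_descent_subset[OF that]]
    by (simp add: ribbonB_def descent_class_def)
  then have "{\<alpha> \<in> pseudo_comps n. ribbonB n \<alpha> mod 2 = 0 mod 2} = {}"
    and "{\<alpha> \<in> pseudo_comps n. ribbonB n \<alpha> mod 2 = 1 mod 2} = pseudo_comps n"
    by (auto simp: odd_iff_mod_2_eq_one)
  then have "cB 2 0 n = 0" and "cB 2 1 n = 2 ^ n"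
    unfolding cB_def by (simp_all only: card.empty card_pseudo_comps)
  with odd show ?thesis
    by blast
qed

end
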